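(* Let $n, r$ be positive integers and let $c: E(G)\to\mathbb{R}$ be a proper edge coloring of a graph $G$. Then there is a proper edge coloring $\widehat{c}: E(G\square K_n)\to\mathbb{R}$ such that $$\dim W_{\widehat{c}}(G\square K_n, r)\geqslant\sum_{t=0}^{n-1}\dim W_c(G, r-t),$$ where $W_c(G, i)$ is defined to be $\{0\}$ if $i\leqslant0$.
   Context: All graphs are finite, simple and undirected; $K_n$ is the complete graph on $n$ vertices. The Cartesian product $G\square H$ has vertex set $V(G)\times V(H)$, with $(g_1,h_1)$ adjacent to $(g_2,h_2)$ iff either $g_1=g_2$ and $h_1h_2\in E(H)$, or $h_1=h_2$ and $g_1g_2\in E(G)$. For a positive integer $r$ and a graph $G$ with a proper edge coloring $c: E(G)\to\mathbb{R}$, $W_c(G,r)$ is the real vector space of all functions $\phi: E(G)\to\mathbb{R}$ for which there exist real polynomials $\{P_v(x)\}_{v\in V(G)}$ with $\deg P_v\leqslant r-1$ for every vertex $v$ and $P_u(c(uv))=P_v(c(uv))=\phi(uv)$ for every edge $uv\in E(G)$. *)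

theory Defs
  imports Main "HOL-Library.Function_Algebras" "HOL-Computational_Algebra.Polynomial"
begin

definition simple_graph :: "'a set \<Rightarrow> 'a set set \<Rightarrow> bool" where
  "simple_graph V E \<longleftrightarrow> finite V \<and>
     (\<forall>e\<in>E. \<exists>u v. e = {u, v} \<and> u \<noteq> v \<and> u \<in> V \<and> v \<in> V)"

definition K_verts :: "nat \<Rightarrow> nat set" where
  "K_verts n = {0..<n}"

definition K_edges :: "nat \<Rightarrow> nat set set" where
  "K_edges n = {{i, j} | i j. i < n \<and> j < n \<and> i \<noteq> j}"

definition cart_verts :: "'a set \<Rightarrow> 'b set \<Rightarrow> ('a \<times> 'b) set" where
  "cart_verts V1 V2 = V1 \<times> V2"

definition cart_edges ::
  "'a set \<Rightarrow> 'a set set \<Rightarrow> 'b set \<Rightarrow> 'b set set \<Rightarrow> ('a \<times> 'b) set set" where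
  "cart_edges V1 E1 V2 E2 =
     {{(g, h1), (g, h2)} | g h1 h2. g \<in> V1 \<and> {h1, h2} \<in> E2} \<union>
     {{(g1, h), (g2, h)} | g1 g2 h. h \<in> V2 \<and> {g1, g2} \<in> E1}"

definition proper_edge_coloring :: "'a set set \<Rightarrow> ('a set \<Rightarrow> real) \<Rightarrow> bool" where
  "proper_edge_coloring E c \<longleftrightarrow>
     (\<forall>e\<in>E. \<forall>f\<in>E. e \<noteq> f \<and> e \<inter> f \<noteq> {} \<longrightarrow> c e \<noteq> c f)"

definition W :: "'a set \<Rightarrow> 'a set set \<Rightarrow> ('a set \<Rightarrow> real) \<Rightarrow> int \<Rightarrow> ('a set \<Rightarrow> real) set" where
  "W V E c r =
    (if r \<le> 0 then {0} else
     {\<phi>. (\<forall>e. e \<notin> E \<longrightarrow> \<phi> e = 0) \<and>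
          (\<exists>P :: 'a \<Rightarrow> real poly.
             (\<forall>v\<in>V. int (degree (P v)) \<le> r - 1) \<and>
             (\<forall>u v. {u, v} \<in> E \<longrightarrow>
                 poly (P u) (c {u, v}) = \<phi> {u, v} \<and> poly (P v) (c {u, v}) = \<phi> {u, v}))})"

definition fdim :: "('b \<Rightarrow> real) set \<Rightarrow> nat" where
  "fdim S = vector_space.dim (\<lambda>(a::real) f x. a * f x) S"

end

theory Submission
  imports Defs
begin

(*
  Colour the copy of K_n at a vertex g of G by giving {(g,i),(g,j)} the colour M + i + j,
  with M above every colour of c, and let every copy of G keep the colouring c.
  Polynomials P realising some \<phi> in W_c(G, r - t) lift to (g,h) \<mapsto> P_g(x) (h (x - M - h))^t,
  of degree < r. At an edge of a copy of K_n both endpoints evaluate h (x - M - h) to i j,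
  so the lift is consistent there, and on the h-th copy of G the lifted function is \<phi> scaled
  by (h (c(e) - M - h))^t. These scale factors are pairwise distinct in h, so a Vandermonde
  argument across the n copies of G shows that the lifts of bases of W_c(G, r - t), t < n,
  are jointly linearly independent in the W-space of the product.
*)

global_interpretation real_fun: vector_space "\<lambda>(a::real) (f::'x \<Rightarrow> real) x. a * f x"
  by unfold_locales (auto simp: fun_eq_iff algebra_simps)

lemma fdim_eq_dim: "fdim S = real_fun.dim S"
  by (simp add: fdim_def)

lemma sum_apply: "(\<Sum>i\<in>A. f i) x = (\<Sum>i\<in>A. f i x)"
  by (induct A rule: infinite_finite_induct) auto

lemma (in vector_space) basis_finite_if_subset_span_finite:
  assumes "S \<subseteq> span T" "finite T"
  obtains B where "finite B" "B \<subseteq> S" "independent B" "S \<subseteq> span B" "card B = dim S"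
proof -
  obtain B where B: "B \<subseteq> S" "independent B" "S \<subseteq> span B" "card B = dim S"
    using basis_exists by blast
  have "finite B"
    using independent_span_bound[OF assms(2) B(2)] B(1) assms(1) by blast
  with B that show ?thesis by blast
qed

lemma (in vector_space) independent_card_le_dim_if_subset_span_finite:
  assumes "S \<subseteq> span T" "finite T" "I \<subseteq> S" "independent I"
  shows "card I \<le> dim S"
proof -
  obtain B where "finite B" "S \<subseteq> span B" "card B = dim S"
    using basis_finite_if_subset_span_finite[OF assms(1,2)] by metis
  then show ?thesis
    using independent_span_bound[of B I] assms(3,4) by auto
qed

lemma finite_support_subset_span:
  fixes S :: "('x \<Rightarrow> real) set"
  assumes "finite F" "\<And>f x. f \<in> S \<Longrightarrow> x \<notin> F \<Longrightarrow> f x = 0"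
  shows "S \<subseteq> real_fun.span ((\<lambda>y x. if x = y then 1 else 0) ` F)"
proof
  fix f assume f: "f \<in> S"
  have "f = (\<Sum>y\<in>F. (\<lambda>x. f y * (if x = y then 1 else 0)))"
    using assms f by (auto simp: fun_eq_iff sum_apply if_distrib cong: if_cong)
  also have "\<dots> \<in> real_fun.span ((\<lambda>y x. if x = y then 1 else 0) ` F)"
    by (intro real_fun.span_sum real_fun.span_scale[where c = "f _", simplified]
        real_fun.span_base) auto
  finally show "f \<in> real_fun.span ((\<lambda>y x. if x = y then 1 else 0) ` F)" .
qed

lemma independent_image_if_scalars_zero:
  fixes f :: "'i \<Rightarrow> 'x \<Rightarrow> real"
  assumes "finite I"
    and scalars_zero: "\<And>a. (\<Sum>i\<in>I. (\<lambda>x. a i * f i x)) = 0 \<Longrightarrow> \<forall>i\<in>I. a i = 0"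
  shows "real_fun.independent (f ` I) \<and> inj_on f I"
proof
  show inj: "inj_on f I"
  proof (rule inj_onI, rule ccontr)
    fix i j assume ij: "i \<in> I" "j \<in> I" "f i = f j" "i \<noteq> j"
    define a where "a k = (if k = i then 1 else if k = j then -1 else (0::real))" for k
    have "(\<Sum>k\<in>I. (\<lambda>x. a k * f k x)) = (\<Sum>k\<in>{i,j}. (\<lambda>x. a k * f k x))"
      by (rule sum.mono_neutral_right) (use assms(1) ij in \<open>auto simp: a_def\<close>)
    also have "\<dots> = 0" using ij by (auto simp: a_def fun_eq_iff)
    finally have "a i = 0" using scalars_zero ij by blast
    then show False by (simp add: a_def)
  qed
  show "real_fun.independent (f ` I)"
  proof (rule real_fun.independent_if_scalars_zero)
    show "finite (f ` I)" using assms(1) by simp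
    fix u v assume sum: "(\<Sum>v\<in>f ` I. (\<lambda>x. u v * v x)) = 0" and v: "v \<in> f ` I"
    have "(\<Sum>i\<in>I. (\<lambda>x. u (f i) * f i x)) = 0"
      using sum by (simp add: sum.reindex[OF inj])
    then have "\<forall>i\<in>I. u (f i) = 0" by (rule scalars_zero)
    then show "u v = 0" using v by blast
  qed
qed

lemma vandermonde_coeffs_zero:
  fixes d y :: "nat \<Rightarrow> real"
  assumes "inj_on y {..<n}" "\<And>h. h < n \<Longrightarrow> (\<Sum>s<n. d s * y h ^ s) = 0" "t < n"
  shows "d t = 0"
proof -
  define p where "p = (\<Sum>s<n. monom (d s) s)"
  have "degree p \<le> n - 1" unfolding p_def
    by (rule degree_sum_le) (auto intro: order.trans[OF degree_monom_le])
  then have deg: "degree p < card (y ` {..<n})"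
    using assms(1,3) by (simp add: card_image)
  have "p = 0"
    by (rule poly_eqI_degree[OF _ deg])
      (use assms(2) deg in \<open>auto simp: p_def poly_sum poly_monom\<close>)
  then have "coeff p t = 0" by simp
  then show ?thesis using assms(3) by (simp add: p_def coeff_sum)
qed

lemma simple_graph_edgeE:
  assumes "simple_graph V E" "e \<in> E"
  obtains u v where "e = {u, v}" "u \<noteq> v" "u \<in> V" "v \<in> V"
  using assms unfolding simple_graph_def by blast

lemma simple_graph_edgeD:
  assumes "simple_graph V E" "{a, b} \<in> E"
  shows "a \<noteq> b" "a \<in> V" "b \<in> V"
  using assms by (auto elim!: simple_graph_edgeE simp: doubleton_eq_iff)

lemma finite_edges:
  assumes "simple_graph V E"
  shows "finite E"
proof (rule finite_subset)
  show "E \<subseteq> Pow V" using assms by (auto elim: simple_graph_edgeE)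
  show "finite (Pow V)" using assms by (simp add: simple_graph_def)
qed

lemma doubleton_in_K_edges_iff: "{i, j} \<in> K_edges n \<longleftrightarrow> i < n \<and> j < n \<and> i \<noteq> j"
  unfolding K_edges_def by (auto simp: doubleton_eq_iff)

lemma cart_edges_cases:
  assumes "simple_graph V E" "e \<in> cart_edges V E (K_verts n) (K_edges n)"
  obtains (K) g i j where "e = {(g, i), (g, j)}" "g \<in> V" "i < n" "j < n" "i \<noteq> j"
    | (G) g1 g2 h where "e = {(g1, h), (g2, h)}" "{g1, g2} \<in> E" "g1 \<noteq> g2" "h < n"
proof -
  from assms(2) consider
      (K) g i j where "e = {(g, i), (g, j)}" "g \<in> V" "{i, j} \<in> K_edges n"
    | (G) g1 g2 h where "e = {(g1, h), (g2, h)}" "{g1, g2} \<in> E" "h \<in> K_verts n"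
    unfolding cart_edges_def by fast
  then show ?thesis
    by cases (use that simple_graph_edgeD(1)[OF assms(1)] in
        \<open>auto simp: doubleton_in_K_edges_iff K_verts_def\<close>)
qed

lemma layer_edge_in_cart_edges:
  assumes "{g1, g2} \<in> E" "h < n"
  shows "{(g1, h), (g2, h)} \<in> cart_edges V E (K_verts n) (K_edges n)"
  unfolding cart_edges_def K_verts_def
  by (intro UnI2 CollectI exI[of _ g1] exI[of _ g2] exI[of _ h]) (use assms in simp)

lemma finite_cart_edges:
  assumes "simple_graph V E"
  shows "finite (cart_edges V E (K_verts n) (K_edges n))"
proof (rule finite_subset)
  show "cart_edges V E (K_verts n) (K_edges n) \<subseteq> Pow (V \<times> {..<n})"
  proof
    fix e assume "e \<in> cart_edges V E (K_verts n) (K_edges n)"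
    with assms show "e \<in> Pow (V \<times> {..<n})"
      by (cases rule: cart_edges_cases) (auto dest: simple_graph_edgeD(2,3)[OF assms])
  qed
  show "finite (Pow (V \<times> {..<n}))" using assms by (simp add: simple_graph_def)
qed

text \<open>An edge e of the product lies in a copy of K_n iff its first projection is a single
  vertex; then the sum of its second projection is i + j.\<close>
definition layered_coloring :: "real \<Rightarrow> ('a set \<Rightarrow> real) \<Rightarrow> ('a \<times> nat) set \<Rightarrow> real" where
  "layered_coloring M c e =
     (if card (fst ` e) = 1 then M + real (\<Sum> (snd ` e)) else c (fst ` e))"

lemma layered_coloring_K_edge [simp]:
  "i \<noteq> j \<Longrightarrow> layered_coloring M c {(g, i), (g, j)} = M + real i + real j"
  by (simp add: layered_coloring_def)

lemma layered_coloring_layer_edge [simp]: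
  "g1 \<noteq> g2 \<Longrightarrow> layered_coloring M c {(g1, h), (g2, h)} = c {g1, g2}"
  by (simp add: layered_coloring_def)

lemma proper_layered_coloring:
  assumes sg: "simple_graph V E" and proper: "proper_edge_coloring E c"
    and below_M: "\<And>e. e \<in> E \<Longrightarrow> c e < M"
  shows "proper_edge_coloring (cart_edges V E (K_verts n) (K_edges n)) (layered_coloring M c)"
  unfolding proper_edge_coloring_def
proof (intro ballI impI)
  fix e f
  assume e: "e \<in> cart_edges V E (K_verts n) (K_edges n)"
    and f: "f \<in> cart_edges V E (K_verts n) (K_edges n)" and ef: "e \<noteq> f \<and> e \<inter> f \<noteq> {}"
  from sg e show "layered_coloring M c e \<noteq> layered_coloring M c f"
  proof (cases rule: cart_edges_cases)
    case eK: (K g i j)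
    from sg f show ?thesis
    proof (cases rule: cart_edges_cases)
      case fK: (K g' i' j')
      have "g = g'" "{i, j} \<inter> {i', j'} \<noteq> {}" "{i, j} \<noteq> {i', j'}"
        using ef eK fK by auto
      then have "i + j \<noteq> i' + j'" by (auto simp: doubleton_eq_iff)
      then show ?thesis using eK fK by simp
    next
      case fG: (G g1 g2 h)
      show ?thesis using eK fG below_M[OF fG(2)] by simp
    qed
  next
    case eG: (G g1 g2 h)
    from sg f show ?thesis
    proof (cases rule: cart_edges_cases)
      case fK: (K g i j)
      show ?thesis using eG fK below_M[OF eG(2)] by simp
    next
      case fG: (G g1' g2' h')
      have "{g1, g2} \<inter> {g1', g2'} \<noteq> {}" "{g1, g2} \<noteq> {g1', g2'}"
        using ef eG fG by auto
      then show ?thesis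
        using proper eG fG unfolding proper_edge_coloring_def by simp
    qed
  qed
qed

definition interpolates ::
  "'a set set \<Rightarrow> ('a set \<Rightarrow> real) \<Rightarrow> ('a \<Rightarrow> real poly) \<Rightarrow> ('a set \<Rightarrow> real) \<Rightarrow> bool" where
  "interpolates E c P \<phi> \<longleftrightarrow>
     (\<forall>u v. {u, v} \<in> E \<longrightarrow> poly (P u) (c {u, v}) = \<phi> {u, v} \<and> poly (P v) (c {u, v}) = \<phi> {u, v})"

lemma mem_W_iff:
  "0 < r \<Longrightarrow> \<phi> \<in> W V E c r \<longleftrightarrow> (\<forall>e. e \<notin> E \<longrightarrow> \<phi> e = 0) \<and>
     (\<exists>P. (\<forall>v\<in>V. int (degree (P v)) \<le> r - 1) \<and> interpolates E c P \<phi>)"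
  by (simp add: W_def interpolates_def)

lemma W_vanishes_off_edges: "\<phi> \<in> W V E c r \<Longrightarrow> e \<notin> E \<Longrightarrow> \<phi> e = 0"
  by (auto simp: W_def split: if_splits)

lemma W_subset_span:
  assumes "finite E"
  shows "W V E c r \<subseteq> real_fun.span ((\<lambda>y x. if x = y then 1 else 0) ` E)"
  using assms W_vanishes_off_edges by (rule finite_support_subset_span)

lemma W_basis_exists:
  assumes "finite E"
  obtains B where "finite B" "B \<subseteq> W V E c r" "real_fun.independent B" "card B = fdim (W V E c r)"
  using real_fun.basis_finite_if_subset_span_finite[OF W_subset_span[OF assms]] assms
  by (metis finite_imageI fdim_eq_dim)

lemma card_le_fdim_W:
  assumes "finite E" "I \<subseteq> W V E c r" "real_fun.independent I"
  shows "card I \<le> fdim (W V E c r)"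
  unfolding fdim_eq_dim
  by (rule real_fun.independent_card_le_dim_if_subset_span_finite[OF W_subset_span]) (use assms in auto)

lemma W_nonzero_interpolated:
  assumes "\<phi> \<in> W V E c r" "\<phi> \<noteq> 0"
  obtains P where "\<forall>v\<in>V. int (degree (P v)) \<le> r - 1" "interpolates E c P \<phi>"
  using assms by (auto simp: W_def interpolates_def split: if_splits)

lemma W_bases_with_interpolants:
  fixes k :: "'i \<Rightarrow> int"
  assumes "finite E"
  obtains B P where
    "\<And>t. finite (B t) \<and> B t \<subseteq> W V E c (k t) \<and> real_fun.independent (B t) \<and>
       card (B t) = fdim (W V E c (k t))"
    "\<And>t b. b \<in> B t \<Longrightarrow>
       (\<forall>v\<in>V. int (degree (P t b v)) \<le> k t - 1) \<and> interpolates E c (P t b) b"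
proof -
  have "\<exists>B. finite B \<and> B \<subseteq> W V E c (k t) \<and> real_fun.independent B \<and>
      card B = fdim (W V E c (k t))" for t
    using W_basis_exists[OF assms] by metis
  then obtain B where B: "\<And>t. finite (B t) \<and> B t \<subseteq> W V E c (k t) \<and>
      real_fun.independent (B t) \<and> card (B t) = fdim (W V E c (k t))"
    by metis
  have "\<exists>Q. (\<forall>v\<in>V. int (degree (Q v)) \<le> k t - 1) \<and> interpolates E c Q b"
    if "b \<in> B t" for t b
  proof -
    have "b \<in> W V E c (k t)" "b \<noteq> 0" using B[of t] that real_fun.dependent_zero by blast+
    then show ?thesis by (metis W_nonzero_interpolated)
  qed
  then have "\<forall>t b. \<exists>Q. b \<in> B t \<longrightarrow>
      (\<forall>v\<in>V. int (degree (Q v)) \<le> k t - 1) \<and> interpolates E c Q b"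
    by blast
  then have "\<exists>P. \<forall>t b. b \<in> B t \<longrightarrow>
      (\<forall>v\<in>V. int (degree (P t b v)) \<le> k t - 1) \<and> interpolates E c (P t b) b"
    by (simp only: choice_iff)
  with B that show ?thesis by blast
qed

definition edge_values ::
  "'a set set \<Rightarrow> ('a set \<Rightarrow> real) \<Rightarrow> ('a \<Rightarrow> real poly) \<Rightarrow> 'a set \<Rightarrow> real" where
  "edge_values E c Q e = (if e \<in> E then poly (Q (SOME u. u \<in> e)) (c e) else 0)"

lemma edge_values_doubleton:
  assumes "{u, v} \<in> E" "poly (Q u) (c {u, v}) = poly (Q v) (c {u, v})"
  shows "edge_values E c Q {u, v} = poly (Q u) (c {u, v})"
proof -
  have "(SOME w. w \<in> {u, v}) \<in> {u, v}" by (rule someI[of _ u]) simp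
  then show ?thesis using assms by (auto simp: edge_values_def)
qed

lemma edge_values_in_W:
  assumes "0 < r" "\<forall>v\<in>V. int (degree (Q v)) \<le> r - 1"
    and agree: "\<And>u v. {u, v} \<in> E \<Longrightarrow> poly (Q u) (c {u, v}) = poly (Q v) (c {u, v})"
  shows "edge_values E c Q \<in> W V E c r"
proof -
  have "interpolates E c Q (edge_values E c Q)"
    unfolding interpolates_def
  proof (intro allI impI)
    fix u v assume uv: "{u, v} \<in> E"
    show "poly (Q u) (c {u, v}) = edge_values E c Q {u, v} \<and>
          poly (Q v) (c {u, v}) = edge_values E c Q {u, v}"
      using edge_values_doubleton[of u v E Q c] uv agree[OF uv] by simp
  qed
  moreover have "\<forall>e. e \<notin> E \<longrightarrow> edge_values E c Q e = 0"
    by (simp add: edge_values_def)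
  ultimately show ?thesis using assms(1,2) by (auto simp: mem_W_iff)
qed

definition layer_lift :: "real \<Rightarrow> nat \<Rightarrow> ('a \<Rightarrow> real poly) \<Rightarrow> 'a \<times> nat \<Rightarrow> real poly" where
  "layer_lift M t P = (\<lambda>(g, h). P g * smult (real h) [:- (M + real h), 1:] ^ t)"

lemma poly_layer_lift [simp]:
  "poly (layer_lift M t P (g, h)) x = poly (P g) x * (real h * (x - M - real h)) ^ t"
  by (simp add: layer_lift_def algebra_simps)

lemma degree_layer_lift: "degree (layer_lift M t P (g, h)) \<le> degree (P g) + t"
proof -
  let ?q = "smult (real h) [:- (M + real h), 1:]"
  have "degree (?q ^ t) \<le> degree ?q * t"
    by (rule degree_power_le)
  also have "\<dots> \<le> t"
    using degree_smult_le[of "real h" "[:- (M + real h), 1:]"] by simp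
  finally have "degree (?q ^ t) \<le> t" .
  then show ?thesis
    unfolding layer_lift_def by (auto intro: order.trans[OF degree_mult_le])
qed

lemma layer_lift_agrees:
  assumes sg: "simple_graph V E" and P: "interpolates E c P \<phi>"
    and uv: "{u, v} \<in> cart_edges V E (K_verts n) (K_edges n)"
  shows "poly (layer_lift M t P u) (layered_coloring M c {u, v}) =
         poly (layer_lift M t P v) (layered_coloring M c {u, v})"
  using sg uv
proof (cases rule: cart_edges_cases)
  case (K g i j)
  then consider "u = (g, i)" "v = (g, j)" | "u = (g, j)" "v = (g, i)"
    by (auto simp: doubleton_eq_iff)
  then show ?thesis using K by cases (simp_all add: algebra_simps)
next
  case (G g1 g2 h)
  then have agree: "poly (P g1) (c {g1, g2}) = poly (P g2) (c {g1, g2})"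
    using P unfolding interpolates_def by metis
  consider "u = (g1, h)" "v = (g2, h)" | "u = (g2, h)" "v = (g1, h)"
    using G by (auto simp: doubleton_eq_iff)
  then show ?thesis using G agree by cases (simp_all add: insert_commute)
qed

definition lift_to_product ::
  "'a set \<Rightarrow> 'a set set \<Rightarrow> nat \<Rightarrow> real \<Rightarrow> ('a set \<Rightarrow> real) \<Rightarrow> nat \<Rightarrow> ('a \<Rightarrow> real poly)
     \<Rightarrow> ('a \<times> nat) set \<Rightarrow> real" where
  "lift_to_product V E n M c t P =
     edge_values (cart_edges V E (K_verts n) (K_edges n)) (layered_coloring M c) (layer_lift M t P)"

lemma lift_to_product_in_W:
  assumes sg: "simple_graph V E" and "0 < r"
    and deg: "\<forall>v\<in>V. int (degree (P v)) \<le> int r - int t - 1" and P: "interpolates E c P \<phi>"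
  shows "lift_to_product V E n M c t P \<in>
    W (cart_verts V (K_verts n)) (cart_edges V E (K_verts n) (K_edges n)) (layered_coloring M c) (int r)"
  unfolding lift_to_product_def
proof (rule edge_values_in_W)
  show "\<forall>v\<in>cart_verts V (K_verts n). int (degree (layer_lift M t P v)) \<le> int r - 1"
  proof
    fix v assume "v \<in> cart_verts V (K_verts n)"
    then obtain g h where gh: "v = (g, h)" "g \<in> V" by (auto simp: cart_verts_def)
    have "int (degree (layer_lift M t P v)) \<le> int (degree (P g)) + int t"
      using degree_layer_lift[of M t P g h] unfolding gh(1) by linarith
    then show "int (degree (layer_lift M t P v)) \<le> int r - 1"
      using deg gh(2) by fastforce
  qed
qed (use assms layer_lift_agrees in auto)

lemma lift_to_product_layer_edge:
  assumes sg: "simple_graph V E" and P: "interpolates E c P \<phi>"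
    and e: "{g1, g2} \<in> E" and h: "h < n"
  shows "lift_to_product V E n M c t P {(g1, h), (g2, h)} =
         \<phi> {g1, g2} * (real h * (c {g1, g2} - M - real h)) ^ t"
proof -
  have edge: "{(g1, h), (g2, h)} \<in> cart_edges V E (K_verts n) (K_edges n)"
    using e h by (rule layer_edge_in_cart_edges)
  have "poly (P g1) (c {g1, g2}) = \<phi> {g1, g2}"
    using P e unfolding interpolates_def by blast
  then show ?thesis
    using edge_values_doubleton[of "(g1, h)" "(g2, h)" _ "layer_lift M t P" "layered_coloring M c",
        OF edge layer_lift_agrees[OF sg P edge]]
      simple_graph_edgeD(1)[OF sg e]
    by (simp add: lift_to_product_def)
qed

lemma inj_layer_factor:
  assumes "x < M"
  shows "inj (\<lambda>h::nat. real h * (x - M - real h))"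
proof (rule injI, rule ccontr)
  fix h h' :: nat
  assume "real h * (x - M - real h) = real h' * (x - M - real h')" "h \<noteq> h'"
  then have "(real h - real h') * (x - M - real h - real h') = 0"
    by (simp add: algebra_simps)
  with \<open>h \<noteq> h'\<close> \<open>x < M\<close> show False by simp
qed

lemma independent_lifts:
  fixes B :: "nat \<Rightarrow> ('a set \<Rightarrow> real) set"
  assumes sg: "simple_graph V E" and below_M: "\<And>e. e \<in> E \<Longrightarrow> c e < M"
    and B: "\<And>t. t < n \<Longrightarrow> finite (B t) \<and> real_fun.independent (B t)"
    and vanish: "\<And>t b e. t < n \<Longrightarrow> b \<in> B t \<Longrightarrow> e \<notin> E \<Longrightarrow> b e = 0"
    and P: "\<And>t b. t < n \<Longrightarrow> b \<in> B t \<Longrightarrow> interpolates E c (P t b) b"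
  defines "\<psi> \<equiv> \<lambda>(t, b). lift_to_product V E n M c t (P t b)"
  shows "real_fun.independent (\<psi> ` Sigma {..<n} B) \<and> inj_on \<psi> (Sigma {..<n} B)"
proof (rule independent_image_if_scalars_zero)
  show "finite (Sigma {..<n} B)" using B by auto
  fix a assume zero: "(\<Sum>i\<in>Sigma {..<n} B. (\<lambda>x. a i * \<psi> i x)) = 0"
  have layer_zero: "(\<Sum>b\<in>B t. a (t, b) * b e) = 0" if "t < n" "e \<in> E" for t e
  proof -
    obtain g1 g2 where e: "e = {g1, g2}" using sg \<open>e \<in> E\<close> by (rule simple_graph_edgeE)
    define y where "y h = real h * (c e - M - real h)" for h
    have "(\<Sum>s<n. (\<Sum>b\<in>B s. a (s, b) * b e) * y h ^ s) = 0" if "h < n" for h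
    proof -
      have "(\<Sum>s<n. (\<Sum>b\<in>B s. a (s, b) * b e) * y h ^ s) =
            (\<Sum>s<n. \<Sum>b\<in>B s. a (s, b) * \<psi> (s, b) {(g1, h), (g2, h)})"
        using lift_to_product_layer_edge[OF sg P] \<open>e \<in> E\<close> \<open>h < n\<close>
        by (simp add: e y_def \<psi>_def sum_distrib_right mult.assoc)
      also have "\<dots> = (\<Sum>i\<in>Sigma {..<n} B. a i * \<psi> i {(g1, h), (g2, h)})"
        using B by (simp add: sum.Sigma split_def)
      also have "\<dots> = 0"
        using fun_cong[OF zero, of "{(g1, h), (g2, h)}"] by (simp add: sum_apply)
      finally show ?thesis .
    qed
    moreover have "inj_on y {..<n}"
      unfolding y_def using inj_layer_factor[OF below_M[OF \<open>e \<in> E\<close>]] by (rule inj_on_subset) simp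
    ultimately show ?thesis
      using vandermonde_coeffs_zero[where d = "\<lambda>s. \<Sum>b\<in>B s. a (s, b) * b e"] \<open>t < n\<close> by blast
  qed
  show "\<forall>i\<in>Sigma {..<n} B. a i = 0"
  proof clarify
    fix t b assume t: "t < n" and b: "b \<in> B t"
    have combination_zero: "(\<Sum>b'\<in>B t. (\<lambda>x. a (t, b') * b' x)) = 0"
    proof
      fix x
      show "(\<Sum>b'\<in>B t. (\<lambda>x. a (t, b') * b' x)) x = 0 x"
      proof (cases "x \<in> E")
        case True
        then show ?thesis using layer_zero[OF t True] by (simp add: sum_apply)
      next
        case False
        then show ?thesis using vanish[OF t _ False] by (simp add: sum_apply sum.neutral)
      qed
    qed
    have "real_fun.independent (B t)" "finite (B t)" using B[OF t] by auto
    from real_fun.independent_explicit_finite_subsets[THEN iffD1, OF this(1), rule_format,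
        OF subset_refl this(2) combination_zero b]
    show "a (t, b) = 0" .
  qed
qed

lemma sum_fdim_W_le_fdim_W_cart:
  assumes sg: "simple_graph V E" and below_M: "\<And>e. e \<in> E \<Longrightarrow> c e < M" and "0 < r"
  shows "(\<Sum>t<n. fdim (W V E c (int r - int t))) \<le>
    fdim (W (cart_verts V (K_verts n)) (cart_edges V E (K_verts n) (K_edges n))
      (layered_coloring M c) (int r))"
    (is "_ \<le> fdim ?W'")
proof -
  obtain B P where
    B: "\<And>t. finite (B t) \<and> B t \<subseteq> W V E c (int r - int t) \<and> real_fun.independent (B t) \<and>
       card (B t) = fdim (W V E c (int r - int t))" and
    P: "\<And>t b. b \<in> B t \<Longrightarrow> (\<forall>v\<in>V. int (degree (P t b v)) \<le> int r - int t - 1) \<and>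
       interpolates E c (P t b) b"
    using W_bases_with_interpolants[OF finite_edges[OF sg]] by metis
  define \<psi> where "\<psi> = (\<lambda>(t, b). lift_to_product V E n M c t (P t b))"
  have indep: "real_fun.independent (\<psi> ` Sigma {..<n} B) \<and> inj_on \<psi> (Sigma {..<n} B)"
    unfolding \<psi>_def
    by (rule independent_lifts[OF sg below_M]) (use B P W_vanishes_off_edges in blast)+
  have "\<psi> (t, b) \<in> ?W'" if "b \<in> B t" for t b
    unfolding \<psi>_def using \<open>0 < r\<close> P[OF that]
    by (simp add: lift_to_product_in_W[OF sg, of r "P t b" t c b])
  then have "\<psi> ` Sigma {..<n} B \<subseteq> ?W'" by auto
  then have "card (\<psi> ` Sigma {..<n} B) \<le> fdim ?W'"
    using indep by (intro card_le_fdim_W[OF finite_cart_edges[OF sg]]) auto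
  moreover have "card (\<psi> ` Sigma {..<n} B) = (\<Sum>t<n. fdim (W V E c (int r - int t)))"
    using indep B by (simp add: card_image card_SigmaI)
  ultimately show ?thesis by simp
qed

theorem lemma3p4:
  fixes V :: "'a set" and E :: "'a set set" and c :: "'a set \<Rightarrow> real"
    and n r :: nat
  assumes "simple_graph V E"
    and "n \<ge> 1" and "r \<ge> 1"
    and "proper_edge_coloring E c"
  shows "\<exists>c' :: ('a \<times> nat) set \<Rightarrow> real.
           proper_edge_coloring (cart_edges V E (K_verts n) (K_edges n)) c' \<and>
           fdim (W (cart_verts V (K_verts n)) (cart_edges V E (K_verts n) (K_edges n)) c' (int r))
             \<ge> (\<Sum>t = 0..n - 1. fdim (W V E c (int r - int t)))"
proof -
  define M where "M = Max (insert 0 (c ` E)) + 1"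
  have below_M: "c e < M" if "e \<in> E" for e
  proof -
    have "c e \<le> Max (insert 0 (c ` E))"
      using finite_edges[OF assms(1)] that by (intro Max_ge) auto
    then show ?thesis by (simp add: M_def)
  qed
  have "{0..n - 1} = {..<n}" using assms(2) by auto
  then show ?thesis
    using proper_layered_coloring[OF assms(1,4) below_M]
      sum_fdim_W_le_fdim_W_cart[OF assms(1) below_M, where r = r and n = n] assms(3)
    by (intro exI[of _ "layered_coloring M c"]) simp
qed

end
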